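(* An umbilic-free isometric immersion $f:M^2\to\mathbb{R}^m$ of a surface with flat normal bundle has semi-parallel Moebius second fundamental form if and only if the Moebius metric $\langle\cdot,\cdot\rangle^*$ has vanishing Gaussian curvature.
   Context: Let $f:M^n\to\mathbb{R}^{m}$ be an isometric immersion of a Riemannian manifold $(M^n,\langle\cdot,\cdot\rangle)$ with second fundamental form $\alpha$, mean curvature vector $\mathcal H=\frac1n\operatorname{tr}\alpha$ and normal connection $\nabla^\perp$ with curvature $R^\perp$. Put $\rho^2=\frac{n}{n-1}(\|\alpha\|^2-n\|\mathcal H\|^2)$; $f$ is umbilic-free if $\rho>0$ everywhere. The Moebius metric is $\langle\cdot,\cdot\rangle^*=\rho^2\langle\cdot,\cdot\rangle$, with Levi-Civita connection $\nabla^*$ and curvature $R^*$; the Moebius second fundamental form is $\beta=\rho(\alpha-\mathcal H\langle\cdot,\cdot\rangle)$. $f$ has semi-parallel Moebius second fundamental form if $R^\perp(X,Y)\beta(Z,W)-\beta(R^*(X,Y)Z,W)-\beta(Z,R^*(X,Y)W)=0$ for all tangent $X,Y,Z,W$. $f$ has flat normal bundle if $R^\perp=0$. *)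

theory Defs
  imports "HOL-Analysis.Analysis"
begin

text \<open>Local (chart) description of a surface immersion f : U \<subseteq> R^2 \<rightarrow> E, E a Euclidean
space (playing R^m).\<close>

definition pd :: "2 \<Rightarrow> (real^2 \<Rightarrow> 'a::real_normed_vector) \<Rightarrow> real^2 \<Rightarrow> 'a" where
  "pd i F x = vector_derivative (\<lambda>t. F (x + t *\<^sub>R axis i 1)) (at 0)"

fun iterpd :: "2 list \<Rightarrow> (real^2 \<Rightarrow> 'a::real_normed_vector) \<Rightarrow> real^2 \<Rightarrow> 'a" where
  "iterpd [] F = F"
| "iterpd (i # ks) F = pd i (iterpd ks F)"

definition smooth_on :: "(real^2) set \<Rightarrow> (real^2 \<Rightarrow> 'a::real_normed_vector) \<Rightarrow> bool" where
  "smooth_on U F \<longleftrightarrow> (\<forall>ks. continuous_on U (iterpd ks F) \<and>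
     (\<forall>i. \<forall>x\<in>U. ((\<lambda>t. iterpd ks F (x + t *\<^sub>R axis i 1)) has_vector_derivative
                     iterpd (i # ks) F x) (at 0)))"

definition immersion_on :: "(real^2) set \<Rightarrow> (real^2 \<Rightarrow> 'e::euclidean_space) \<Rightarrow> bool" where
  "immersion_on U f \<longleftrightarrow> open U \<and> smooth_on U f \<and>
     (\<forall>p\<in>U. inj (\<lambda>v::real^2. \<Sum>a\<in>UNIV. v $ a *\<^sub>R pd a f p))"

definition gmat :: "(real^2 \<Rightarrow> 'e::euclidean_space) \<Rightarrow> real^2 \<Rightarrow> real^2^2" where
  "gmat f p = (\<chi> a b. inner (pd a f p) (pd b f p))"

definition ginv :: "(real^2 \<Rightarrow> 'e::euclidean_space) \<Rightarrow> real^2 \<Rightarrow> real^2^2" where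
  "ginv f p = matrix_inv (gmat f p)"

definition tproj :: "(real^2 \<Rightarrow> 'e::euclidean_space) \<Rightarrow> real^2 \<Rightarrow> 'e \<Rightarrow> 'e" where
  "tproj f p v = (\<Sum>a\<in>UNIV. \<Sum>b\<in>UNIV. (ginv f p $ a $ b * inner v (pd b f p)) *\<^sub>R pd a f p)"

definition nproj :: "(real^2 \<Rightarrow> 'e::euclidean_space) \<Rightarrow> real^2 \<Rightarrow> 'e \<Rightarrow> 'e" where
  "nproj f p v = v - tproj f p v"

definition sff :: "(real^2 \<Rightarrow> 'e::euclidean_space) \<Rightarrow> real^2 \<Rightarrow> 2 \<Rightarrow> 2 \<Rightarrow> 'e" where
  "sff f p a b = nproj f p (pd a (pd b f) p)"

definition meancurv :: "(real^2 \<Rightarrow> 'e::euclidean_space) \<Rightarrow> real^2 \<Rightarrow> 'e" where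
  "meancurv f p = (1/2) *\<^sub>R (\<Sum>a\<in>UNIV. \<Sum>b\<in>UNIV. ginv f p $ a $ b *\<^sub>R sff f p a b)"

definition sff_norm2 :: "(real^2 \<Rightarrow> 'e::euclidean_space) \<Rightarrow> real^2 \<Rightarrow> real" where
  "sff_norm2 f p = (\<Sum>a\<in>UNIV. \<Sum>b\<in>UNIV. \<Sum>c\<in>UNIV. \<Sum>d\<in>UNIV.
      ginv f p $ a $ c * ginv f p $ b $ d * inner (sff f p a b) (sff f p c d))"

text \<open>rho^2 = n/(n-1) (|alpha|^2 - n |H|^2) with n = 2.\<close>
definition rho :: "(real^2 \<Rightarrow> 'e::euclidean_space) \<Rightarrow> real^2 \<Rightarrow> real" where
  "rho f p = sqrt (2 * (sff_norm2 f p - 2 * (norm (meancurv f p))^2))"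

definition umbilic_free :: "(real^2) set \<Rightarrow> (real^2 \<Rightarrow> 'e::euclidean_space) \<Rightarrow> bool" where
  "umbilic_free U f \<longleftrightarrow> (\<forall>p\<in>U. rho f p > 0)"

text \<open>Moebius metric g* = rho^2 g, its Christoffel symbols Gamma^c_ab (argument order a b c)
and curvature components: R*(d_i,d_j) d_k = sum_c moeb_curv f p i j k c d_c, where
R(X,Y) = nabla_X nabla_Y - nabla_Y nabla_X - nabla_[X,Y].\<close>
definition moeb_metric :: "(real^2 \<Rightarrow> 'e::euclidean_space) \<Rightarrow> real^2 \<Rightarrow> real^2^2" where
  "moeb_metric f p = (\<chi> a b. (rho f p)^2 * gmat f p $ a $ b)"

definition moeb_christ :: "(real^2 \<Rightarrow> 'e::euclidean_space) \<Rightarrow> real^2 \<Rightarrow> 2 \<Rightarrow> 2 \<Rightarrow> 2 \<Rightarrow> real" where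
  "moeb_christ f p a b c = (1/2) * (\<Sum>d\<in>UNIV. matrix_inv (moeb_metric f p) $ c $ d *
      (pd a (\<lambda>q. moeb_metric f q $ b $ d) p + pd b (\<lambda>q. moeb_metric f q $ a $ d) p
       - pd d (\<lambda>q. moeb_metric f q $ a $ b) p))"

definition moeb_curv :: "(real^2 \<Rightarrow> 'e::euclidean_space) \<Rightarrow> real^2 \<Rightarrow> 2 \<Rightarrow> 2 \<Rightarrow> 2 \<Rightarrow> 2 \<Rightarrow> real" where
  "moeb_curv f p i j k c =
     pd i (\<lambda>q. moeb_christ f q j k c) p - pd j (\<lambda>q. moeb_christ f q i k c) p
     + (\<Sum>e\<in>UNIV. moeb_christ f p j k e * moeb_christ f p i e c
                 - moeb_christ f p i k e * moeb_christ f p j e c)"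

definition moeb_gauss :: "(real^2 \<Rightarrow> 'e::euclidean_space) \<Rightarrow> real^2 \<Rightarrow> real" where
  "moeb_gauss f p = (\<Sum>c\<in>UNIV. moeb_curv f p 1 2 2 c * moeb_metric f p $ c $ 1)
                    / det (moeb_metric f p)"

definition moeb_sff :: "(real^2 \<Rightarrow> 'e::euclidean_space) \<Rightarrow> real^2 \<Rightarrow> 2 \<Rightarrow> 2 \<Rightarrow> 'e" where
  "moeb_sff f p a b = rho f p *\<^sub>R (sff f p a b - gmat f p $ a $ b *\<^sub>R meancurv f p)"

definition normal_curv :: "(real^2 \<Rightarrow> 'e::euclidean_space) \<Rightarrow> (real^2 \<Rightarrow> 'e) \<Rightarrow> real^2 \<Rightarrow> 2 \<Rightarrow> 2 \<Rightarrow> 'e" where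
  "normal_curv f \<xi> p i j =
     nproj f p (pd i (\<lambda>q. nproj f q (pd j \<xi> q)) p)
   - nproj f p (pd j (\<lambda>q. nproj f q (pd i \<xi> q)) p)"

definition normal_field :: "(real^2) set \<Rightarrow> (real^2 \<Rightarrow> 'e::euclidean_space) \<Rightarrow> (real^2 \<Rightarrow> 'e) \<Rightarrow> bool" where
  "normal_field U f \<xi> \<longleftrightarrow> smooth_on U \<xi> \<and> (\<forall>p\<in>U. \<forall>a. inner (\<xi> p) (pd a f p) = 0)"

definition flat_normal_bundle :: "(real^2) set \<Rightarrow> (real^2 \<Rightarrow> 'e::euclidean_space) \<Rightarrow> bool" where
  "flat_normal_bundle U f \<longleftrightarrow>
     (\<forall>\<xi>. normal_field U f \<xi> \<longrightarrow> (\<forall>p\<in>U. \<forall>i j. normal_curv f \<xi> p i j = 0))"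

text \<open>Semi-parallel Moebius second fundamental form, on the coordinate frame
(all terms are tensorial, so this is equivalent to the condition for all X,Y,Z,W).\<close>
definition semi_parallel_moeb_sff :: "(real^2) set \<Rightarrow> (real^2 \<Rightarrow> 'e::euclidean_space) \<Rightarrow> bool" where
  "semi_parallel_moeb_sff U f \<longleftrightarrow>
     (\<forall>p\<in>U. \<forall>i j k l.
        normal_curv f (\<lambda>q. moeb_sff f q k l) p i j
        - (\<Sum>c\<in>UNIV. moeb_curv f p i j k c *\<^sub>R moeb_sff f p c l)
        - (\<Sum>c\<in>UNIV. moeb_curv f p i j l c *\<^sub>R moeb_sff f p k c) = 0)"

end

(*
  With flat normal bundle, semi-parallelity of the Moebius second fundamental form beta says
  exactly that each curvature operator R*(X,Y) of the Moebius metric g* annihilates beta as a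
  derivation. On a surface R*(d1,d2) is g*-skew, hence K* times a fixed g*-skew endomorphism J
  (a rescaled rotation by a right angle). If K* = 0 the condition holds trivially. If K* /= 0,
  beta is a symmetric, g*-traceless form annihilated by J, which forces beta = 0; but then alpha is
  umbilic, i.e. rho = 0, contradicting umbilic-freeness. The rest is coordinate calculus:
  smoothness of all quantities involved, and the skew-symmetry of the lowered curvature tensor,
  which rests on the symmetry of second partial derivatives of the metric.
*)
theory Submission
  imports Defs
begin

lemma matrix_inv_mult:
  fixes A :: "'a::semiring_1^'n^'m"
  assumes "invertible A"
  shows "A ** matrix_inv A = mat 1" "matrix_inv A ** A = mat 1"
  using someI_ex[OF assms[unfolded invertible_def]] unfolding matrix_inv_def by blast+

lemma matrix_inv_2x2:
  fixes A :: "real^2^2"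
  assumes "det A \<noteq> 0"
  shows "matrix_inv A $ 1 $ 1 = A$2$2 / det A" "matrix_inv A $ 1 $ 2 = - A$1$2 / det A"
        "matrix_inv A $ 2 $ 1 = - A$2$1 / det A" "matrix_inv A $ 2 $ 2 = A$1$1 / det A"
proof -
  define B :: "real^2^2" where "B = (\<chi> i j. if i = 1 \<and> j = 1 then A$2$2 / det A
     else if i = 1 \<and> j = 2 then - A$1$2 / det A else if i = 2 \<and> j = 1 then - A$2$1 / det A
     else A$1$1 / det A)"
  have AB: "A ** B = mat 1"
    using assms unfolding det_2 B_def
    by (simp add: vec_eq_iff forall_2 matrix_matrix_mult_def sum_2 mat_def)
       (simp_all add: divide_simps; simp add: algebra_simps)
  have inv: "invertible A" using assms by (simp add: invertible_det_nz)
  have "matrix_inv A = (matrix_inv A ** A) ** B"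
    by (simp add: AB matrix_mul_assoc[symmetric] matrix_mul_rid)
  then have "matrix_inv A = B" by (simp add: matrix_inv_mult(2)[OF inv] matrix_mul_lid)
  then show "matrix_inv A $ 1 $ 1 = A$2$2 / det A" "matrix_inv A $ 1 $ 2 = - A$1$2 / det A"
        "matrix_inv A $ 2 $ 1 = - A$2$1 / det A" "matrix_inv A $ 2 $ 2 = A$1$1 / det A"
    by (simp_all add: B_def)
qed

lemma matrix_inv_2x2_symmetric:
  fixes A :: "real^2^2"
  assumes "det A \<noteq> 0" "\<And>a b. A $ a $ b = A $ b $ a"
  shows "matrix_inv A $ a $ b = matrix_inv A $ b $ a"
  using matrix_inv_2x2[OF assms(1)] assms(2)[of 1 2] exhaust_2[of a] exhaust_2[of b] by auto

lemma matrix_inv_2x2_contract: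
  fixes A :: "real^2^2"
  assumes "det A \<noteq> 0"
  shows "(\<Sum>c\<in>UNIV. matrix_inv A $ c $ d * A $ l $ c) = (if l = d then 1 else 0)"
proof -
  have "(A ** matrix_inv A) $ l $ d = mat 1 $ l $ d"
    using assms by (simp add: matrix_inv_mult invertible_det_nz)
  then show ?thesis by (simp add: matrix_matrix_mult_def mat_def mult.commute)
qed

definition has_pd :: "2 \<Rightarrow> (real^2 \<Rightarrow> 'a::real_normed_vector) \<Rightarrow> real^2 \<Rightarrow> 'a \<Rightarrow> bool" where
  "has_pd i F x D \<longleftrightarrow> ((\<lambda>t. F (x + t *\<^sub>R axis i 1)) has_vector_derivative D) (at 0)"

lemma has_pd_imp_pd: "has_pd i F x D \<Longrightarrow> pd i F x = D"
  unfolding has_pd_def pd_def by (rule vector_derivative_at)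

lemma has_pd_real_iff:
  fixes F :: "real^2 \<Rightarrow> real"
  shows "has_pd i F x D \<longleftrightarrow> ((\<lambda>t. F (x + t *\<^sub>R axis i 1)) has_real_derivative D) (at 0)"
  unfolding has_pd_def has_real_derivative_iff_has_vector_derivative ..

lemma has_pd_const: "has_pd i (\<lambda>_. c) x 0"
  unfolding has_pd_def by (rule has_vector_derivative_const)

lemma has_pd_add: "has_pd i F x a \<Longrightarrow> has_pd i G x b \<Longrightarrow> has_pd i (\<lambda>y. F y + G y) x (a + b)"
  unfolding has_pd_def by (rule has_vector_derivative_add)

lemma has_pd_linear:
  "bounded_linear L \<Longrightarrow> has_pd i F x a \<Longrightarrow> has_pd i (\<lambda>y. L (F y)) x (L a)"
  unfolding has_pd_def by (rule bounded_linear.has_vector_derivative)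

lemma has_pd_mult:
  fixes F G :: "real^2 \<Rightarrow> real"
  assumes "has_pd i F x a" "has_pd i G x b"
  shows "has_pd i (\<lambda>y. F y * G y) x (a * G x + F x * b)"
proof -
  have "((\<lambda>t. F (x + t *\<^sub>R axis i 1) * G (x + t *\<^sub>R axis i 1)) has_real_derivative
          a * G (x + 0 *\<^sub>R axis i 1) + b * F (x + 0 *\<^sub>R axis i 1)) (at 0)"
    using assms unfolding has_pd_real_iff by (rule DERIV_mult)
  then show ?thesis unfolding has_pd_real_iff by (simp add: mult.commute)
qed

lemma has_pd_inverse:
  fixes F :: "real^2 \<Rightarrow> real"
  assumes "has_pd i F x a" "F x \<noteq> 0"
  shows "has_pd i (\<lambda>y. inverse (F y)) x (- (a * (inverse (F x) * inverse (F x))))"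
proof -
  have "((\<lambda>t. inverse (F (x + t *\<^sub>R axis i 1))) has_real_derivative
          - (a * inverse ((F (x + 0 *\<^sub>R axis i 1)) ^ Suc (Suc 0)))) (at 0)"
    using assms unfolding has_pd_real_iff by (intro DERIV_inverse_fun) auto
  then show ?thesis unfolding has_pd_real_iff by (simp add: power2_eq_square inverse_mult_distrib)
qed

lemma has_pd_sqrt:
  fixes F :: "real^2 \<Rightarrow> real"
  assumes "has_pd i F x a" "F x > 0"
  shows "has_pd i (\<lambda>y. sqrt (F y)) x (inverse (2 * sqrt (F x)) * a)"
proof -
  have "((\<lambda>t. sqrt (F (x + t *\<^sub>R axis i 1))) has_real_derivative (inverse (sqrt (F x)) / 2) * a) (at 0)"
    using assms unfolding has_pd_real_iff
    by (intro DERIV_chain2[of sqrt] DERIV_real_sqrt) (auto intro!: DERIV_real_sqrt)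
  then show ?thesis unfolding has_pd_real_iff by (simp add: divide_simps mult.commute)
qed

lemma has_pd_shift:
  fixes G :: "real^2 \<Rightarrow> real"
  assumes "has_pd i G (y + s *\<^sub>R axis i 1) D"
  shows "((\<lambda>t. G (y + t *\<^sub>R axis i 1)) has_real_derivative D) (at s)"
proof -
  have "((\<lambda>t. G ((y + s *\<^sub>R axis i 1) + t *\<^sub>R axis i 1)) has_real_derivative D) (at 0)"
    using assms unfolding has_pd_real_iff .
  moreover have "(\<lambda>t. G ((y + s *\<^sub>R axis i 1) + t *\<^sub>R axis i 1)) = (\<lambda>t. G (y + (t + s) *\<^sub>R axis i 1))"
    by (simp add: algebra_simps)
  ultimately show ?thesis using DERIV_shift[of "\<lambda>t. G (y + t *\<^sub>R axis i 1)" D 0 s] by simp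
qed

lemma eventually_line_in_open:
  fixes x v :: "'a::real_normed_vector"
  assumes "open U" "x \<in> U"
  shows "eventually (\<lambda>t. x + t *\<^sub>R v \<in> U) (nhds (0::real))"
proof -
  have "continuous_on UNIV (\<lambda>t::real. x + t *\<^sub>R v)" by (intro continuous_intros)
  then have "open ((\<lambda>t::real. x + t *\<^sub>R v) -` U)"
    using continuous_on_open_vimage[of UNIV "\<lambda>t::real. x + t *\<^sub>R v"] assms(1) by auto
  moreover have "(0::real) \<in> (\<lambda>t::real. x + t *\<^sub>R v) -` U" using assms by simp
  ultimately show ?thesis unfolding eventually_nhds by blast
qed

lemma pd_cong:
  assumes "open U" "x \<in> U" "\<And>y. y \<in> U \<Longrightarrow> F y = G y"
  shows "pd i F x = pd i G x"
  unfolding pd_def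
  by (rule vector_derivative_cong_eq)
     (use eventually_line_in_open[OF assms(1,2), of "axis i 1"] assms(3) in \<open>auto elim: eventually_mono\<close>)

lemma has_pd_cong:
  assumes "open U" "x \<in> U" "\<And>y. y \<in> U \<Longrightarrow> F y = G y" "has_pd i F x D"
  shows "has_pd i G x D"
proof -
  have "((\<lambda>t. F (x + t *\<^sub>R axis i 1)) has_vector_derivative D) (at 0 within UNIV)
     = ((\<lambda>t. G (x + t *\<^sub>R axis i 1)) has_vector_derivative D) (at 0 within UNIV)"
    by (rule has_vector_derivative_cong_ev)
       (use eventually_line_in_open[OF assms(1,2), of "axis i 1"] assms in \<open>auto elim: eventually_mono\<close>)
  then show ?thesis using assms(4) unfolding has_pd_def by simp
qed

section \<open>Smooth functions\<close>

definition partially_differentiable_on :: "(real^2) set \<Rightarrow> (real^2 \<Rightarrow> 'a::real_normed_vector) \<Rightarrow> bool" where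
  "partially_differentiable_on U F \<longleftrightarrow> continuous_on U F \<and> (\<forall>i. \<forall>x\<in>U. has_pd i F x (pd i F x))"

lemma smooth_on_iff_iterpd: "smooth_on U F \<longleftrightarrow> (\<forall>ks. partially_differentiable_on U (iterpd ks F))"
  unfolding smooth_on_def partially_differentiable_on_def has_pd_def by simp

lemma partially_differentiable_on_cong:
  assumes "open U" "\<And>y. y \<in> U \<Longrightarrow> F y = G y" "partially_differentiable_on U F"
  shows "partially_differentiable_on U G"
proof -
  have "continuous_on U G"
    using assms continuous_on_cong[of U U F G] unfolding partially_differentiable_on_def by auto
  moreover have "has_pd i G x (pd i G x)" if "x \<in> U" for i x
    using assms has_pd_cong[OF assms(1) that, of F G] pd_cong[OF assms(1) that, of F G i]
    unfolding partially_differentiable_on_def by (metis that)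
  ultimately show ?thesis unfolding partially_differentiable_on_def by blast
qed

lemma smooth_on_coinduct:
  assumes U: "open U" and "S F"
    and partial: "\<And>G. S G \<Longrightarrow> partially_differentiable_on U G"
    and closed: "\<And>G i. S G \<Longrightarrow> \<exists>H. S H \<and> (\<forall>x\<in>U. H x = pd i G x)"
  shows "smooth_on U F"
proof -
  have "\<exists>H. S H \<and> (\<forall>x\<in>U. H x = iterpd ks F x)" for ks
  proof (induction ks)
    case Nil then show ?case using \<open>S F\<close> by auto
  next
    case (Cons i ks)
    then obtain H where H: "S H" "\<forall>x\<in>U. H x = iterpd ks F x" by blast
    obtain H' where H': "S H'" "\<forall>x\<in>U. H' x = pd i H x" using closed[OF H(1)] by blast
    have "\<forall>x\<in>U. H' x = iterpd (i # ks) F x"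
      using H' pd_cong[OF U, of _ H "iterpd ks F" i] H(2) by simp
    then show ?case using H' by blast
  qed
  then show ?thesis unfolding smooth_on_iff_iterpd
    using partial partially_differentiable_on_cong[OF U] by metis
qed

lemma iterpd_append_single: "iterpd (ks @ [i]) F = iterpd ks (pd i F)"
  by (induction ks) auto

lemma smooth_on_pd: "smooth_on U F \<Longrightarrow> smooth_on U (pd i F)"
  unfolding smooth_on_iff_iterpd by (metis iterpd_append_single)

lemma smooth_on_imp_partially_differentiable_on: "smooth_on U F \<Longrightarrow> partially_differentiable_on U F"
  unfolding smooth_on_iff_iterpd by (metis iterpd.simps(1))

lemma smooth_on_has_pd: "smooth_on U F \<Longrightarrow> x \<in> U \<Longrightarrow> has_pd i F x (pd i F x)"
  using smooth_on_imp_partially_differentiable_on unfolding partially_differentiable_on_def by blast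

lemma smooth_on_continuous_on: "smooth_on U F \<Longrightarrow> continuous_on U F"
  using smooth_on_imp_partially_differentiable_on unfolding partially_differentiable_on_def by blast

lemma smooth_on_cong:
  assumes U: "open U" and "smooth_on U F" "\<And>y. y \<in> U \<Longrightarrow> F y = G y"
  shows "smooth_on U G"
proof (rule smooth_on_coinduct[OF U, where S = "\<lambda>H. \<exists>F. smooth_on U F \<and> (\<forall>y\<in>U. F y = H y)"])
  show "\<exists>F. smooth_on U F \<and> (\<forall>y\<in>U. F y = G y)" using assms by blast
next
  fix H assume "\<exists>F. smooth_on U F \<and> (\<forall>y\<in>U. F y = H y)"
  then show "partially_differentiable_on U H"
    using smooth_on_imp_partially_differentiable_on partially_differentiable_on_cong[OF U] by metis
next
  fix H i assume "\<exists>F. smooth_on U F \<and> (\<forall>y\<in>U. F y = H y)"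
  then obtain F where F: "smooth_on U F" "\<forall>y\<in>U. F y = H y" by blast
  then show "\<exists>H'. (\<exists>F. smooth_on U F \<and> (\<forall>y\<in>U. F y = H' y)) \<and> (\<forall>x\<in>U. H' x = pd i H x)"
    using smooth_on_pd[OF F(1)] pd_cong[OF U, of _ F H i] by (intro exI[of _ "pd i F"]) auto
qed

lemma smooth_on_const:
  assumes U: "open U"
  shows "smooth_on U (\<lambda>_. c)"
proof (rule smooth_on_coinduct[OF U, where S = "\<lambda>H. \<exists>c. \<forall>y\<in>U. H y = c"])
  fix G :: "real^2 \<Rightarrow> 'a" assume "\<exists>c. \<forall>y\<in>U. G y = c"
  then obtain c where c: "\<forall>y\<in>U. G y = c" by blast
  have "pd i (\<lambda>_. c) x = 0" for i x using has_pd_imp_pd[OF has_pd_const] .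
  then have "partially_differentiable_on U (\<lambda>_. c)"
    unfolding partially_differentiable_on_def by (simp add: has_pd_const)
  then show "partially_differentiable_on U G" using partially_differentiable_on_cong[OF U] c by metis
  have "pd i G x = 0" if "x \<in> U" for i x
    using pd_cong[OF U that, of G "\<lambda>_. c" i] c has_pd_imp_pd[OF has_pd_const] by simp
  then show "\<exists>H. (\<exists>c. \<forall>y\<in>U. H y = c) \<and> (\<forall>x\<in>U. H x = pd i G x)" for i
    by (intro exI[of _ "\<lambda>_. 0"]) auto
qed auto

lemma smooth_on_linear:
  assumes L: "bounded_linear L" and U: "open U" and V: "smooth_on U V"
  shows "smooth_on U (\<lambda>x. L (V x))"
proof (rule smooth_on_coinduct[OF U, where S = "\<lambda>W. \<exists>V. smooth_on U V \<and> (\<forall>x\<in>U. L (V x) = W x)"])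
  fix W assume "\<exists>V. smooth_on U V \<and> (\<forall>x\<in>U. L (V x) = W x)"
  then obtain V where V: "smooth_on U V" "\<forall>x\<in>U. L (V x) = W x" by blast
  have d: "has_pd i (\<lambda>x. L (V x)) x (L (pd i V x))" if "x \<in> U" for i x
    using has_pd_linear[OF L smooth_on_has_pd[OF V(1) that]] .
  have "partially_differentiable_on U (\<lambda>x. L (V x))"
    unfolding partially_differentiable_on_def
    using d has_pd_imp_pd[OF d] bounded_linear.continuous_on[OF L smooth_on_continuous_on[OF V(1)]]
    by simp
  then show "partially_differentiable_on U W" using partially_differentiable_on_cong[OF U] V(2) by metis
  have "\<forall>x\<in>U. L (pd i V x) = pd i W x" for i
    using has_pd_imp_pd[OF d] pd_cong[OF U, of _ "\<lambda>x. L (V x)" W i] V(2) by simp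
  then show "\<exists>H. (\<exists>V. smooth_on U V \<and> (\<forall>x\<in>U. L (V x) = H x)) \<and> (\<forall>x\<in>U. H x = pd i W x)" for i
    using smooth_on_pd[OF V(1)] by (intro exI[of _ "\<lambda>x. L (pd i V x)"]) blast
qed (use V in blast)

lemma pd_linear:
  "bounded_linear L \<Longrightarrow> smooth_on U V \<Longrightarrow> x \<in> U \<Longrightarrow> pd i (\<lambda>x. L (V x)) x = L (pd i V x)"
  using has_pd_imp_pd has_pd_linear smooth_on_has_pd by blast

lemma smooth_on_add:
  assumes U: "open U" and "smooth_on U F" "smooth_on U G"
  shows "smooth_on U (\<lambda>x. F x + G x)"
proof (rule smooth_on_coinduct[OF U,
      where S = "\<lambda>W. \<exists>F G. smooth_on U F \<and> smooth_on U G \<and> (\<forall>x\<in>U. F x + G x = W x)"])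
  show "\<exists>F' G'. smooth_on U F' \<and> smooth_on U G' \<and> (\<forall>x\<in>U. F' x + G' x = F x + G x)"
    using assms by blast
next
  fix W assume "\<exists>F G. smooth_on U F \<and> smooth_on U G \<and> (\<forall>x\<in>U. F x + G x = W x)"
  then obtain F' G' where F': "smooth_on U F'" and G': "smooth_on U G'"
    and W: "\<And>x. x \<in> U \<Longrightarrow> F' x + G' x = W x" by blast
  have d: "has_pd i W x (pd i F' x + pd i G' x)" if "x \<in> U" for i x
    by (rule has_pd_cong[OF U that W has_pd_add[OF smooth_on_has_pd[OF F' that] smooth_on_has_pd[OF G' that]]])
  have "continuous_on U W"
    using continuous_on_add[OF smooth_on_continuous_on[OF F'] smooth_on_continuous_on[OF G']]
      continuous_on_cong[of U U "\<lambda>x. F' x + G' x" W] W by simp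
  then show "partially_differentiable_on U W"
    unfolding partially_differentiable_on_def using d has_pd_imp_pd[OF d] by simp
  show "\<exists>H. (\<exists>F G. smooth_on U F \<and> smooth_on U G \<and> (\<forall>x\<in>U. F x + G x = H x))
      \<and> (\<forall>x\<in>U. H x = pd i W x)" for i
    using smooth_on_pd[OF F'] smooth_on_pd[OF G'] has_pd_imp_pd[OF d]
    by (intro exI[of _ "\<lambda>x. pd i F' x + pd i G' x"]) auto
qed

lemma smooth_on_sum:
  assumes U: "open U" and "finite A" and "\<And>a. a \<in> A \<Longrightarrow> smooth_on U (F a)"
  shows "smooth_on U (\<lambda>x. \<Sum>a\<in>A. F a x)"
  using assms(2,3)
proof (induction A rule: finite_induct)
  case empty then show ?case using smooth_on_const[OF U, of 0] by simp
next
  case (insert a A) then show ?case using smooth_on_add[OF U, of "F a" "\<lambda>x. \<Sum>a\<in>A. F a x"] by simp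
qed

lemma smooth_on_minus: "open U \<Longrightarrow> smooth_on U F \<Longrightarrow> smooth_on U (\<lambda>x. - F x)"
  using smooth_on_linear[OF bounded_linear_minus[OF bounded_linear_ident]] .

lemma smooth_on_diff:
  "open U \<Longrightarrow> smooth_on U F \<Longrightarrow> smooth_on U G \<Longrightarrow> smooth_on U (\<lambda>x. F x - G x)"
  using smooth_on_add[of U F "\<lambda>x. - G x"] smooth_on_minus[of U G] by simp

lemma smooth_on_inner_const:
  "open U \<Longrightarrow> smooth_on U V \<Longrightarrow> smooth_on U (\<lambda>x. inner (V x) w)"
  by (rule smooth_on_linear[OF bounded_linear_inner_left])

text \<open>The class generated from smooth real functions by products, inverses and square roots
  contains the partial derivatives of its members, so by coinduction it consists of smooth
  functions.\<close>

inductive smooth_algebra :: "(real^2) set \<Rightarrow> (real^2 \<Rightarrow> real) \<Rightarrow> bool" for U where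
  smooth: "smooth_on U F \<Longrightarrow> smooth_algebra U F"
| cong: "smooth_algebra U F \<Longrightarrow> (\<forall>y\<in>U. F y = G y) \<Longrightarrow> smooth_algebra U G"
| add: "smooth_algebra U F \<Longrightarrow> smooth_algebra U G \<Longrightarrow> smooth_algebra U (\<lambda>x. F x + G x)"
| mult: "smooth_algebra U F \<Longrightarrow> smooth_algebra U G \<Longrightarrow> smooth_algebra U (\<lambda>x. F x * G x)"
| inverse: "smooth_algebra U F \<Longrightarrow> (\<forall>y\<in>U. F y \<noteq> 0) \<Longrightarrow> smooth_algebra U (\<lambda>x. inverse (F x))"
| sqrt: "smooth_algebra U F \<Longrightarrow> (\<forall>y\<in>U. F y > 0) \<Longrightarrow> smooth_algebra U (\<lambda>x. sqrt (F x))"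

lemma smooth_algebra_cmult:
  "open U \<Longrightarrow> smooth_algebra U F \<Longrightarrow> smooth_algebra U (\<lambda>x. c * F x)"
  by (rule smooth_algebra.mult[OF smooth_algebra.smooth[OF smooth_on_const]])

lemma smooth_algebra_minus:
  "open U \<Longrightarrow> smooth_algebra U F \<Longrightarrow> smooth_algebra U (\<lambda>x. - F x)"
  using smooth_algebra_cmult[of U F "- 1"] by simp

lemma smooth_algebra_continuous_on: "smooth_algebra U F \<Longrightarrow> continuous_on U F"
proof (induction rule: smooth_algebra.induct)
  case (cong F G)
  then show ?case using continuous_on_cong[of U U F G] by simp
qed (auto intro: continuous_intros smooth_on_continuous_on)

lemma smooth_algebra_has_pd:
  assumes "smooth_algebra U F" "open U"
  shows "\<exists>G. smooth_algebra U G \<and> (\<forall>x\<in>U. has_pd i F x (G x))"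
  using assms(1)
proof induction
  case (smooth F)
  then show ?case using smooth_on_has_pd smooth_algebra.smooth[OF smooth_on_pd] by blast
next
  case (cong F G)
  then show ?case using has_pd_cong[OF assms(2), of _ F G] by metis
next
  case (add F G)
  then obtain F' G' where "smooth_algebra U F'" "\<forall>x\<in>U. has_pd i F x (F' x)"
    "smooth_algebra U G'" "\<forall>x\<in>U. has_pd i G x (G' x)" by blast
  then show ?case by (intro exI[of _ "\<lambda>x. F' x + G' x"]) (simp add: has_pd_add smooth_algebra.add)
next
  case (mult F G)
  then obtain F' G' where F': "smooth_algebra U F'" "\<forall>x\<in>U. has_pd i F x (F' x)"
    and G': "smooth_algebra U G'" "\<forall>x\<in>U. has_pd i G x (G' x)" by blast
  have "smooth_algebra U (\<lambda>x. F' x * G x + F x * G' x)"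
    by (rule smooth_algebra.add[OF smooth_algebra.mult[OF F'(1) mult.hyps(2)]
                                  smooth_algebra.mult[OF mult.hyps(1) G'(1)]])
  then show ?case using has_pd_mult F'(2) G'(2) by blast
next
  case (inverse F)
  then obtain F' where F': "smooth_algebra U F'" "\<forall>x\<in>U. has_pd i F x (F' x)" by blast
  have inv: "smooth_algebra U (\<lambda>x. inverse (F x))"
    by (rule smooth_algebra.inverse[OF inverse.hyps])
  have "smooth_algebra U (\<lambda>x. - (F' x * (inverse (F x) * inverse (F x))))"
    by (rule smooth_algebra_minus[OF assms(2) smooth_algebra.mult[OF F'(1) smooth_algebra.mult[OF inv inv]]])
  then show ?case using has_pd_inverse F'(2) inverse.hyps(2) by blast
next
  case (sqrt F)
  then obtain F' where F': "smooth_algebra U F'" "\<forall>x\<in>U. has_pd i F x (F' x)" by blast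
  have "smooth_algebra U (\<lambda>x. 2 * sqrt (F x))"
    by (rule smooth_algebra_cmult[OF assms(2) smooth_algebra.sqrt[OF sqrt.hyps]])
  then have "smooth_algebra U (\<lambda>x. inverse (2 * sqrt (F x)) * F' x)"
    using sqrt.hyps(2) by (intro smooth_algebra.mult[OF smooth_algebra.inverse F'(1)]) auto
  then show ?case using has_pd_sqrt F'(2) sqrt.hyps(2) by blast
qed

lemma smooth_algebra_smooth_on:
  assumes "smooth_algebra U F" "open U"
  shows "smooth_on U F"
proof (rule smooth_on_coinduct[OF assms(2), where S = "smooth_algebra U"])
  fix G i assume G: "smooth_algebra U G"
  obtain H where H: "smooth_algebra U H" "\<forall>x\<in>U. has_pd i G x (H x)"
    using smooth_algebra_has_pd[OF G assms(2)] by blast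
  have "H x = pd i G x" if "x \<in> U" for x
    using has_pd_imp_pd[OF H(2)[rule_format, OF that]] by simp
  then show "\<exists>H. smooth_algebra U H \<and> (\<forall>x\<in>U. H x = pd i G x)" using H(1) by blast
next
  fix G assume G: "smooth_algebra U G"
  have "has_pd i G x (pd i G x)" if "x \<in> U" for i x
  proof -
    obtain H where "\<forall>x\<in>U. has_pd i G x (H x)" using smooth_algebra_has_pd[OF G assms(2)] by blast
    then show ?thesis using that has_pd_imp_pd by metis
  qed
  then show "partially_differentiable_on U G"
    using smooth_algebra_continuous_on[OF G] unfolding partially_differentiable_on_def by blast
qed (fact assms(1))

lemma smooth_on_mult:
  fixes F G :: "real^2 \<Rightarrow> real"
  assumes "open U" "smooth_on U F" "smooth_on U G"
  shows "smooth_on U (\<lambda>x. F x * G x)"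
  using smooth_algebra.mult[OF smooth_algebra.smooth[OF assms(2)] smooth_algebra.smooth[OF assms(3)]]
  by (rule smooth_algebra_smooth_on[OF _ assms(1)])

lemma smooth_on_inverse:
  fixes F :: "real^2 \<Rightarrow> real"
  assumes "open U" "smooth_on U F" "\<And>x. x \<in> U \<Longrightarrow> F x \<noteq> 0"
  shows "smooth_on U (\<lambda>x. inverse (F x))"
  using smooth_algebra.inverse[OF smooth_algebra.smooth[OF assms(2)]] assms(3)
  by (intro smooth_algebra_smooth_on[OF _ assms(1)]) blast

lemma smooth_on_divide:
  fixes F G :: "real^2 \<Rightarrow> real"
  assumes "open U" "smooth_on U F" "smooth_on U G" "\<And>x. x \<in> U \<Longrightarrow> G x \<noteq> 0"
  shows "smooth_on U (\<lambda>x. F x / G x)"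
  using smooth_on_mult[OF assms(1,2) smooth_on_inverse[OF assms(1,3,4)]] by (simp add: divide_inverse)

lemma smooth_on_sqrt:
  fixes F :: "real^2 \<Rightarrow> real"
  assumes "open U" "smooth_on U F" "\<And>x. x \<in> U \<Longrightarrow> F x > 0"
  shows "smooth_on U (\<lambda>x. sqrt (F x))"
  using smooth_algebra.sqrt[OF smooth_algebra.smooth[OF assms(2)]] assms(3)
  by (intro smooth_algebra_smooth_on[OF _ assms(1)]) blast

lemma smooth_on_componentwise:
  fixes V :: "real^2 \<Rightarrow> 'e::euclidean_space"
  assumes U: "open U" and "\<And>b. b \<in> Basis \<Longrightarrow> smooth_on U (\<lambda>x. inner (V x) b)"
  shows "smooth_on U V"
proof -
  have "smooth_on U (\<lambda>x. inner (V x) b *\<^sub>R b)" if "b \<in> Basis" for b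
    by (rule smooth_on_linear[OF bounded_linear_scaleR_left U assms(2)[OF that]])
  then have "smooth_on U (\<lambda>x. \<Sum>b\<in>Basis. inner (V x) b *\<^sub>R b)"
    by (rule smooth_on_sum[OF U finite_Basis])
  then show ?thesis by (simp add: euclidean_representation)
qed

lemma smooth_on_scaleR:
  fixes V :: "real^2 \<Rightarrow> 'e::euclidean_space"
  assumes U: "open U" and "smooth_on U c" "smooth_on U V"
  shows "smooth_on U (\<lambda>x. c x *\<^sub>R V x)"
proof (rule smooth_on_componentwise[OF U])
  fix b :: 'e
  show "smooth_on U (\<lambda>x. inner (c x *\<^sub>R V x) b)"
    using smooth_on_mult[OF U assms(2) smooth_on_inner_const[OF U assms(3)]] by simp
qed

lemma smooth_on_inner:
  fixes V W :: "real^2 \<Rightarrow> 'e::euclidean_space"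
  assumes U: "open U" and "smooth_on U V" "smooth_on U W"
  shows "smooth_on U (\<lambda>x. inner (V x) (W x))"
proof -
  have "smooth_on U (\<lambda>x. inner (V x) b * inner (W x) b)" if "b \<in> Basis" for b
    by (rule smooth_on_mult[OF U smooth_on_inner_const[OF U assms(2)] smooth_on_inner_const[OF U assms(3)]])
  then have "smooth_on U (\<lambda>x. \<Sum>b\<in>Basis. inner (V x) b * inner (W x) b)"
    by (rule smooth_on_sum[OF U finite_Basis])
  then show ?thesis by (simp add: euclidean_inner[symmetric])
qed

section \<open>Symmetry of second partial derivatives\<close>

lemma second_difference_mean_value:
  fixes F :: "real^2 \<Rightarrow> real"
  assumes S: "smooth_on U F" and B: "ball x r \<subseteq> U" and h: "0 < h" "2 * h < r"
  shows "\<exists>a b. 0 < a \<and> a < h \<and> 0 < b \<and> b < h \<and>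
    F (x + h *\<^sub>R axis i 1 + h *\<^sub>R axis j 1) - F (x + h *\<^sub>R axis i 1) - F (x + h *\<^sub>R axis j 1) + F x
     = h * h * pd j (pd i F) (x + a *\<^sub>R axis i 1 + b *\<^sub>R axis j 1)"
proof -
  define ei :: "real^2" where "ei = axis i 1"
  define ej :: "real^2" where "ej = axis j 1"
  have inU: "x + a *\<^sub>R ei + b *\<^sub>R ej \<in> U" if "0 \<le> a" "a \<le> h" "0 \<le> b" "b \<le> h" for a b
  proof -
    have "norm (a *\<^sub>R ei + b *\<^sub>R ej) \<le> a + b"
      using norm_triangle_ineq[of "a *\<^sub>R ei" "b *\<^sub>R ej"] that by (simp add: ei_def ej_def)
    moreover have "dist x (x + (a *\<^sub>R ei + b *\<^sub>R ej)) = norm (a *\<^sub>R ei + b *\<^sub>R ej)"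
      by (metis add_diff_cancel_left' dist_norm dist_commute)
    ultimately have "x + (a *\<^sub>R ei + b *\<^sub>R ej) \<in> ball x r" using that h by simp
    then show ?thesis using B by (auto simp: add.assoc)
  qed
  have dF: "((\<lambda>t. F (y + t *\<^sub>R ei)) has_real_derivative pd i F (y + s *\<^sub>R ei)) (at s)"
    if "y + s *\<^sub>R ei \<in> U" for y s
    unfolding ei_def by (rule has_pd_shift, rule smooth_on_has_pd[OF S]) (use that in \<open>simp add: ei_def\<close>)
  define \<phi> where "\<phi> s = F (x + s *\<^sub>R ei + h *\<^sub>R ej) - F (x + s *\<^sub>R ei)" for s
  have "DERIV \<phi> s :> pd i F (x + s *\<^sub>R ei + h *\<^sub>R ej) - pd i F (x + s *\<^sub>R ei)" if "0 \<le> s" "s \<le> h" for s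
    using DERIV_diff[OF dF[of "x + h *\<^sub>R ej" s] dF[of x s]] inU[of s h] inU[of s 0] that h
    unfolding \<phi>_def by (simp add: ac_simps)
  then obtain \<xi> where \<xi>: "0 < \<xi>" "\<xi> < h"
    "\<phi> h - \<phi> 0 = h * (pd i F (x + \<xi> *\<^sub>R ei + h *\<^sub>R ej) - pd i F (x + \<xi> *\<^sub>R ei))"
    using MVT2[OF h(1), of \<phi> "\<lambda>s. pd i F (x + s *\<^sub>R ei + h *\<^sub>R ej) - pd i F (x + s *\<^sub>R ei)"]
    by auto
  define \<psi> where "\<psi> t = pd i F (x + \<xi> *\<^sub>R ei + t *\<^sub>R ej)" for t
  have "DERIV \<psi> t :> pd j (pd i F) (x + \<xi> *\<^sub>R ei + t *\<^sub>R ej)" if "0 \<le> t" "t \<le> h" for t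
    unfolding \<psi>_def ej_def
    by (rule has_pd_shift, rule smooth_on_has_pd[OF smooth_on_pd[OF S]])
       (use inU[of \<xi> t] that \<xi> in \<open>simp add: ej_def\<close>)
  then obtain \<eta> where \<eta>: "0 < \<eta>" "\<eta> < h" "\<psi> h - \<psi> 0 = h * pd j (pd i F) (x + \<xi> *\<^sub>R ei + \<eta> *\<^sub>R ej)"
    using MVT2[OF h(1), of \<psi> "\<lambda>t. pd j (pd i F) (x + \<xi> *\<^sub>R ei + t *\<^sub>R ej)"] by auto
  have "F (x + h *\<^sub>R ei + h *\<^sub>R ej) - F (x + h *\<^sub>R ei) - F (x + h *\<^sub>R ej) + F x = \<phi> h - \<phi> 0"
    unfolding \<phi>_def by simp
  also have "\<dots> = h * h * pd j (pd i F) (x + \<xi> *\<^sub>R ei + \<eta> *\<^sub>R ej)"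
    using \<xi>(3) \<eta>(3) unfolding \<psi>_def by simp
  finally show ?thesis using \<xi> \<eta> unfolding ei_def ej_def by blast
qed

lemma pd_commute_12:
  fixes F :: "real^2 \<Rightarrow> real"
  assumes U: "open U" and S: "smooth_on U F" and x: "x \<in> U"
  shows "pd 2 (pd 1 F) x = pd 1 (pd 2 F) x"
proof (rule ccontr)
  define c1 where "c1 = pd 2 (pd 1 F) x"
  define c2 where "c2 = pd 1 (pd 2 F) x"
  define e where "e = \<bar>c1 - c2\<bar> / 2"
  assume "pd 2 (pd 1 F) x \<noteq> pd 1 (pd 2 F) x"
  then have e: "e > 0" by (simp add: e_def c1_def c2_def)
  obtain r where r: "r > 0" "ball x r \<subseteq> U" using U x open_contains_ball by blast
  have "isCont (pd j (pd i F)) x" for i j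
    using smooth_on_continuous_on[OF smooth_on_pd[OF smooth_on_pd[OF S]]] U x
    by (simp add: continuous_on_eq_continuous_at)
  then obtain d1 d2 where d1: "d1 > 0" "\<And>y. dist y x < d1 \<Longrightarrow> dist (pd 2 (pd 1 F) y) c1 < e"
    and d2: "d2 > 0" "\<And>y. dist y x < d2 \<Longrightarrow> dist (pd 1 (pd 2 F) y) c2 < e"
    using e unfolding continuous_at_eps_delta c1_def c2_def by meson
  define h where "h = min r (min d1 d2) / 4"
  have h: "0 < h" "2 * h < r" "2 * h < d1" "2 * h < d2" using r d1 d2 by (auto simp: h_def)
  have near: "dist (x + p *\<^sub>R axis i 1 + q *\<^sub>R axis j 1) x < 2 * h"
    if "0 < p" "p < h" "0 < q" "q < h" for p q and i j :: 2
    using norm_triangle_ineq[of "p *\<^sub>R axis i (1::real)" "q *\<^sub>R axis j 1"] that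
    by (simp add: dist_norm add.assoc)
  obtain a b where ab: "0 < a" "a < h" "0 < b" "b < h"
    "F (x + h *\<^sub>R axis 1 1 + h *\<^sub>R axis 2 1) - F (x + h *\<^sub>R axis 1 1) - F (x + h *\<^sub>R axis 2 1) + F x
     = h * h * pd 2 (pd 1 F) (x + a *\<^sub>R axis 1 1 + b *\<^sub>R axis 2 1)"
    using second_difference_mean_value[OF S r(2) h(1,2), of 1 2] by blast
  obtain a' b' where ab': "0 < a'" "a' < h" "0 < b'" "b' < h"
    "F (x + h *\<^sub>R axis 2 1 + h *\<^sub>R axis 1 1) - F (x + h *\<^sub>R axis 2 1) - F (x + h *\<^sub>R axis 1 1) + F x
     = h * h * pd 1 (pd 2 F) (x + a' *\<^sub>R axis 2 1 + b' *\<^sub>R axis 1 1)"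
    using second_difference_mean_value[OF S r(2) h(1,2), of 2 1] by blast
  have "h * h * pd 2 (pd 1 F) (x + a *\<^sub>R axis 1 1 + b *\<^sub>R axis 2 1)
      = h * h * pd 1 (pd 2 F) (x + a' *\<^sub>R axis 2 1 + b' *\<^sub>R axis 1 1)"
    using ab(5) ab'(5) by (simp add: algebra_simps)
  then have eq: "pd 2 (pd 1 F) (x + a *\<^sub>R axis 1 1 + b *\<^sub>R axis 2 1)
      = pd 1 (pd 2 F) (x + a' *\<^sub>R axis 2 1 + b' *\<^sub>R axis 1 1)"
    using h(1) by simp
  have "dist (pd 2 (pd 1 F) (x + a *\<^sub>R axis 1 1 + b *\<^sub>R axis 2 1)) c1 < e"
    using d1(2) near[OF ab(1-4), of 1 2] h(3) by simp
  moreover have "dist (pd 1 (pd 2 F) (x + a' *\<^sub>R axis 2 1 + b' *\<^sub>R axis 1 1)) c2 < e"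
    using d2(2) near[OF ab'(1-4), of 2 1] h(4) by simp
  ultimately have "\<bar>c1 - c2\<bar> < 2 * e" using eq by (simp add: dist_real_def)
  then show False by (simp add: e_def)
qed

lemma pd_commute:
  fixes F :: "real^2 \<Rightarrow> real"
  assumes "open U" "smooth_on U F" "x \<in> U"
  shows "pd i (pd j F) x = pd j (pd i F) x"
  using pd_commute_12[OF assms] exhaust_2[of i] exhaust_2[of j] by auto

section \<open>Curvature of a metric in coordinates\<close>

definition christoffel :: "(real^2 \<Rightarrow> real^2^2) \<Rightarrow> real^2 \<Rightarrow> 2 \<Rightarrow> 2 \<Rightarrow> 2 \<Rightarrow> real" where
  "christoffel M p a b c = (1/2) * (\<Sum>d\<in>UNIV. matrix_inv (M p) $ c $ d *
      (pd a (\<lambda>q. M q $ b $ d) p + pd b (\<lambda>q. M q $ a $ d) p - pd d (\<lambda>q. M q $ a $ b) p))"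

definition christoffel_lowered :: "(real^2 \<Rightarrow> real^2^2) \<Rightarrow> real^2 \<Rightarrow> 2 \<Rightarrow> 2 \<Rightarrow> 2 \<Rightarrow> real" where
  "christoffel_lowered M p a b d =
     (1/2) * (pd a (\<lambda>q. M q $ b $ d) p + pd b (\<lambda>q. M q $ a $ d) p - pd d (\<lambda>q. M q $ a $ b) p)"

definition riemann :: "(real^2 \<Rightarrow> real^2^2) \<Rightarrow> real^2 \<Rightarrow> 2 \<Rightarrow> 2 \<Rightarrow> 2 \<Rightarrow> 2 \<Rightarrow> real" where
  "riemann M p i j k c =
     pd i (\<lambda>q. christoffel M q j k c) p - pd j (\<lambda>q. christoffel M q i k c) p
     + (\<Sum>e\<in>UNIV. christoffel M p j k e * christoffel M p i e c - christoffel M p i k e * christoffel M p j e c)"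

lemma moeb_christ_eq_christoffel: "moeb_christ f = christoffel (moeb_metric f)"
  by (simp add: fun_eq_iff moeb_christ_def christoffel_def)

lemma moeb_curv_eq_riemann: "moeb_curv f = riemann (moeb_metric f)"
  by (simp add: fun_eq_iff moeb_curv_def riemann_def moeb_christ_eq_christoffel)

lemma christoffel_eq_raise: "christoffel M p a b c = (\<Sum>d\<in>UNIV. matrix_inv (M p) $ c $ d * christoffel_lowered M p a b d)"
  unfolding christoffel_def christoffel_lowered_def by (simp add: sum_distrib_left algebra_simps)

lemma riemann_antisym: "riemann M p j i k c = - riemann M p i j k c"
  unfolding riemann_def by (simp add: sum_subtractf algebra_simps)

lemma riemann_diag: "riemann M p i i k c = 0"
  unfolding riemann_def by simp

locale metric_field =
  fixes U :: "(real^2) set" and M :: "real^2 \<Rightarrow> real^2^2"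
  assumes open_U: "open U"
    and symmetric: "M q $ a $ b = M q $ b $ a"
    and det_nonzero: "q \<in> U \<Longrightarrow> det (M q) \<noteq> 0"
    and smooth_entries: "smooth_on U (\<lambda>q. M q $ a $ b)"
begin

lemma smooth_on_inverse_entries: "smooth_on U (\<lambda>q. matrix_inv (M q) $ a $ b)"
proof -
  have "smooth_on U (\<lambda>q. det (M q))"
    unfolding det_2 by (intro smooth_on_diff smooth_on_mult smooth_entries open_U)
  then have "smooth_on U (\<lambda>q. (if a = 1 \<and> b = 1 then M q $ 2 $ 2 else if a = 1 \<and> b = 2 then - M q $ 1 $ 2
      else if a = 2 \<and> b = 1 then - M q $ 2 $ 1 else M q $ 1 $ 1) / det (M q))"
    using exhaust_2[of a] exhaust_2[of b] det_nonzero
    by (auto intro!: smooth_on_divide smooth_on_minus smooth_entries open_U)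
  then show ?thesis
    by (rule smooth_on_cong[OF open_U])
       (use exhaust_2[of a] exhaust_2[of b] matrix_inv_2x2[OF det_nonzero] in auto)
qed

lemma smooth_on_christoffel_lowered: "smooth_on U (\<lambda>q. christoffel_lowered M q a b c)"
  unfolding christoffel_lowered_def
  by (intro smooth_on_mult smooth_on_const smooth_on_add smooth_on_diff smooth_on_pd smooth_entries open_U)

lemma smooth_on_christoffel: "smooth_on U (\<lambda>q. christoffel M q a b c)"
  unfolding christoffel_eq_raise
  by (intro smooth_on_sum smooth_on_mult smooth_on_inverse_entries smooth_on_christoffel_lowered open_U) simp

lemma christoffel_lower:
  assumes "q \<in> U"
  shows "(\<Sum>c\<in>UNIV. christoffel M q a b c * M q $ c $ l) = christoffel_lowered M q a b l"
proof -
  let ?L = "christoffel_lowered M q a b" and ?I = "matrix_inv (M q)"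
  have "(\<Sum>c\<in>UNIV. christoffel M q a b c * M q $ c $ l)
      = (\<Sum>c\<in>UNIV. \<Sum>d\<in>UNIV. ?L d * (?I $ c $ d * M q $ l $ c))"
    unfolding christoffel_eq_raise sum_distrib_right by (simp add: symmetric[of q _ l] ac_simps)
  also have "\<dots> = (\<Sum>d\<in>UNIV. ?L d * (\<Sum>c\<in>UNIV. ?I $ c $ d * M q $ l $ c))"
    unfolding sum_distrib_left by (rule sum.swap)
  also have "\<dots> = ?L l"
    by (simp add: matrix_inv_2x2_contract[OF det_nonzero[OF assms]] if_distrib cong: if_cong)
  finally show ?thesis .
qed

lemma pd_entry_eq_christoffel_lowered:
  "pd i (\<lambda>q. M q $ c $ l) p = christoffel_lowered M p i c l + christoffel_lowered M p i l c"
proof -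
  have "(\<lambda>q. M q $ l $ c) = (\<lambda>q. M q $ c $ l)" using symmetric by auto
  then show ?thesis unfolding christoffel_lowered_def by (simp add: field_simps)
qed

lemma pd_christoffel_lowered:
  assumes "p \<in> U"
  shows "pd i (\<lambda>q. christoffel_lowered M q j k l) p = (\<Sum>c\<in>UNIV.
     pd i (\<lambda>q. christoffel M q j k c) p * M p $ c $ l + christoffel M p j k c * pd i (\<lambda>q. M q $ c $ l) p)"
proof -
  have "pd i (\<lambda>q. christoffel_lowered M q j k l) p
      = pd i (\<lambda>q. christoffel M q j k 1 * M q $ 1 $ l + christoffel M q j k 2 * M q $ 2 $ l) p"
    by (rule pd_cong[OF open_U assms]) (simp add: christoffel_lower[symmetric] sum_2)
  moreover have "has_pd i (\<lambda>q. christoffel M q j k 1 * M q $ 1 $ l + christoffel M q j k 2 * M q $ 2 $ l) p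
      ((pd i (\<lambda>q. christoffel M q j k 1) p * M p $ 1 $ l + christoffel M p j k 1 * pd i (\<lambda>q. M q $ 1 $ l) p)
      + (pd i (\<lambda>q. christoffel M q j k 2) p * M p $ 2 $ l + christoffel M p j k 2 * pd i (\<lambda>q. M q $ 2 $ l) p))"
    by (intro has_pd_add has_pd_mult smooth_on_has_pd[OF smooth_on_christoffel assms]
        smooth_on_has_pd[OF smooth_entries assms])
  ultimately show ?thesis by (simp add: sum_2 has_pd_imp_pd)
qed

lemma riemann_lowered:
  assumes "p \<in> U"
  shows "(\<Sum>c\<in>UNIV. riemann M p i j k c * M p $ c $ l)
    = pd i (\<lambda>q. christoffel_lowered M q j k l) p - pd j (\<lambda>q. christoffel_lowered M q i k l) p
      - (\<Sum>c\<in>UNIV. christoffel M p j k c * christoffel_lowered M p i l c)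
      + (\<Sum>c\<in>UNIV. christoffel M p i k c * christoffel_lowered M p j l c)"
proof -
  let ?\<Gamma> = "christoffel M p" and ?L = "christoffel_lowered M p"
  have derivative: "(\<Sum>c\<in>UNIV. pd i (\<lambda>q. christoffel M q j k c) p * M p $ c $ l)
      = pd i (\<lambda>q. christoffel_lowered M q j k l) p - (\<Sum>c\<in>UNIV. ?\<Gamma> j k c * (?L i c l + ?L i l c))" for i j
    using pd_christoffel_lowered[OF assms, of i j k l]
    by (simp add: pd_entry_eq_christoffel_lowered sum.distrib algebra_simps)
  have "(\<Sum>c\<in>UNIV. riemann M p i j k c * M p $ c $ l)
      = (\<Sum>c\<in>UNIV. pd i (\<lambda>q. christoffel M q j k c) p * M p $ c $ l)
        - (\<Sum>c\<in>UNIV. pd j (\<lambda>q. christoffel M q i k c) p * M p $ c $ l)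
        + (\<Sum>e\<in>UNIV. ?\<Gamma> j k e * (\<Sum>c\<in>UNIV. ?\<Gamma> i e c * M p $ c $ l))
        - (\<Sum>e\<in>UNIV. ?\<Gamma> i k e * (\<Sum>c\<in>UNIV. ?\<Gamma> j e c * M p $ c $ l))"
    unfolding riemann_def by (simp add: sum_2 algebra_simps)
  then show ?thesis
    unfolding derivative christoffel_lower[OF assms] by (simp add: sum_2 algebra_simps)
qed

lemma christoffel_contract_swap:
  assumes "q \<in> U"
  shows "(\<Sum>c\<in>UNIV. christoffel M q a b c * christoffel_lowered M q d e c)
       = (\<Sum>c\<in>UNIV. christoffel M q d e c * christoffel_lowered M q a b c)"
  using matrix_inv_2x2_symmetric[OF det_nonzero[OF assms] symmetric, of 1 2]
  unfolding christoffel_eq_raise by (simp add: sum_2 algebra_simps)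

lemma pd_christoffel_lowered_sym:
  assumes "p \<in> U"
  shows "pd i (\<lambda>q. christoffel_lowered M q j k l) p + pd i (\<lambda>q. christoffel_lowered M q j l k) p
       = pd i (pd j (\<lambda>q. M q $ k $ l)) p"
proof -
  have "has_pd i (\<lambda>q. christoffel_lowered M q j k l + christoffel_lowered M q j l k) p
      (pd i (\<lambda>q. christoffel_lowered M q j k l) p + pd i (\<lambda>q. christoffel_lowered M q j l k) p)"
    by (intro has_pd_add smooth_on_has_pd[OF smooth_on_christoffel_lowered assms])
  moreover have "(\<lambda>q. christoffel_lowered M q j k l + christoffel_lowered M q j l k) = pd j (\<lambda>q. M q $ k $ l)"
    by (simp add: fun_eq_iff pd_entry_eq_christoffel_lowered)
  ultimately show ?thesis by (simp add: has_pd_imp_pd)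
qed

lemma riemann_lowered_skew:
  assumes "p \<in> U"
  shows "(\<Sum>c\<in>UNIV. riemann M p i j k c * M p $ c $ l) + (\<Sum>c\<in>UNIV. riemann M p i j l c * M p $ c $ k) = 0"
proof -
  have "pd i (pd j (\<lambda>q. M q $ k $ l)) p = pd j (pd i (\<lambda>q. M q $ k $ l)) p"
    by (rule pd_commute[OF open_U smooth_entries assms])
  then show ?thesis
    using pd_christoffel_lowered_sym[OF assms, of i j k l] pd_christoffel_lowered_sym[OF assms, of j i k l]
      christoffel_contract_swap[OF assms, of j k i l] christoffel_contract_swap[OF assms, of i k j l]
    unfolding riemann_lowered[OF assms] by linarith
qed

end

section \<open>Endomorphisms of a plane that are skew for a metric\<close>

lemma metric_skew_2x2_entries:
  fixes M :: "real^2^2" and r :: "2 \<Rightarrow> 2 \<Rightarrow> real"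
  assumes sym: "M $ 2 $ 1 = M $ 1 $ 2"
    and skew: "\<And>k l. (\<Sum>c\<in>UNIV. r k c * M $ c $ l) + (\<Sum>c\<in>UNIV. r l c * M $ c $ k) = 0"
  defines "s \<equiv> \<Sum>c\<in>UNIV. r 2 c * M $ c $ 1"
  shows "r 1 1 * det M = M $ 1 $ 2 * s" "r 1 2 * det M = - M $ 1 $ 1 * s"
    "r 2 1 * det M = M $ 2 $ 2 * s" "r 2 2 * det M = - M $ 1 $ 2 * s"
proof -
  define a b d where "a = M $ 1 $ 1" "b = M $ 1 $ 2" "d = M $ 2 $ 2"
  have det: "det M = a * d - b * b" using sym by (simp add: det_2 a_b_d_def)
  have s: "s = r 2 1 * a + r 2 2 * b" using sym by (simp add: s_def sum_2 a_b_d_def)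
  have S11: "r 1 1 * a + r 1 2 * b = 0" using skew[of 1 1] sym by (simp add: sum_2 a_b_d_def)
  have S22: "r 2 1 * b + r 2 2 * d = 0" using skew[of 2 2] sym by (simp add: sum_2 a_b_d_def)
  have S12: "r 1 1 * b + r 1 2 * d = - s" using skew[of 1 2] sym by (simp add: s_def sum_2 a_b_d_def)
  have "r 1 1 * det M = d * (r 1 1 * a + r 1 2 * b) - b * (r 1 1 * b + r 1 2 * d)"
    "r 1 2 * det M = a * (r 1 1 * b + r 1 2 * d) - b * (r 1 1 * a + r 1 2 * b)"
    "r 2 1 * det M = d * (r 2 1 * a + r 2 2 * b) - b * (r 2 1 * b + r 2 2 * d)"
    "r 2 2 * det M = a * (r 2 1 * b + r 2 2 * d) - b * (r 2 1 * a + r 2 2 * b)"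
    unfolding det by (simp_all add: algebra_simps)
  then show "r 1 1 * det M = M $ 1 $ 2 * s" "r 1 2 * det M = - M $ 1 $ 1 * s"
    "r 2 1 * det M = M $ 2 $ 2 * s" "r 2 2 * det M = - M $ 1 $ 2 * s"
    unfolding S11 S22 S12 s[symmetric] by (simp_all add: a_b_d_def)
qed

lemma metric_skew_2x2_eq_0:
  fixes M :: "real^2^2" and r :: "2 \<Rightarrow> 2 \<Rightarrow> real"
  assumes "det M \<noteq> 0" "M $ 2 $ 1 = M $ 1 $ 2"
    and "\<And>k l. (\<Sum>c\<in>UNIV. r k c * M $ c $ l) + (\<Sum>c\<in>UNIV. r l c * M $ c $ k) = 0"
    and "(\<Sum>c\<in>UNIV. r 2 c * M $ c $ 1) = 0"
  shows "r k c = 0"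
  using metric_skew_2x2_entries[OF assms(2,3)] assms(1,4) exhaust_2[of k] exhaust_2[of c] by auto

text \<open>If the metric-skew endomorphism does not vanish, it is a nonzero multiple of a rotation by a
  right angle, and the only symmetric bilinear forms it annihilates are multiples of the metric.\<close>

lemma metric_skew_2x2_annihilates_traceless_real:
  fixes M :: "real^2^2" and r x :: "2 \<Rightarrow> 2 \<Rightarrow> real"
  assumes det: "det M > 0" and sym: "M $ 2 $ 1 = M $ 1 $ 2"
    and skew: "\<And>k l. (\<Sum>c\<in>UNIV. r k c * M $ c $ l) + (\<Sum>c\<in>UNIV. r l c * M $ c $ k) = 0"
    and s: "(\<Sum>c\<in>UNIV. r 2 c * M $ c $ 1) \<noteq> 0"
    and x_sym: "x 2 1 = x 1 2"
    and annihilated: "\<And>k l. (\<Sum>c\<in>UNIV. r k c * x c l) + (\<Sum>c\<in>UNIV. r l c * x k c) = 0"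
    and traceless: "(\<Sum>a\<in>UNIV. \<Sum>b\<in>UNIV. matrix_inv M $ a $ b * x a b) = 0"
  shows "x a b = 0"
proof -
  define m11 m12 m22 D s where "m11 = M $ 1 $ 1" "m12 = M $ 1 $ 2" "m22 = M $ 2 $ 2" "D = det M"
    "s = (\<Sum>c\<in>UNIV. r 2 c * M $ c $ 1)"
  note r = metric_skew_2x2_entries[OF sym skew, folded m11_m12_m22_D_s_def]
  have "s \<noteq> 0" "D > 0" using s det by (simp_all add: m11_m12_m22_D_s_def)
  have D: "D = m11 * m22 - m12 * m12" using sym by (simp add: det_2 m11_m12_m22_D_s_def)
  have "D * (\<Sum>a\<in>UNIV. \<Sum>b\<in>UNIV. matrix_inv M $ a $ b * x a b) = m22 * x 1 1 - 2 * m12 * x 1 2 + m11 * x 2 2"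
    using sym x_sym det by (simp add: sum_2 matrix_inv_2x2 m11_m12_m22_D_s_def field_simps)
  then have tr: "m22 * x 1 1 - 2 * m12 * x 1 2 + m11 * x 2 2 = 0" using traceless by simp
  have E11: "r 1 1 * x 1 1 + r 1 2 * x 1 2 = 0" using annihilated[of 1 1] x_sym by (simp add: sum_2)
  have E12: "r 1 1 * x 1 2 + r 1 2 * x 2 2 + r 2 1 * x 1 1 + r 2 2 * x 1 2 = 0"
    using annihilated[of 1 2] x_sym by (simp add: sum_2 algebra_simps)
  have "s * (m12 * x 1 1 - m11 * x 1 2) = (r 1 1 * D) * x 1 1 + (r 1 2 * D) * x 1 2"
    unfolding r by (simp add: algebra_simps)
  also have "\<dots> = D * (r 1 1 * x 1 1 + r 1 2 * x 1 2)" by (simp add: algebra_simps)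
  finally have e1: "m12 * x 1 1 = m11 * x 1 2" using E11 \<open>s \<noteq> 0\<close> by simp
  have "s * (m22 * x 1 1 - m11 * x 2 2)
      = (r 1 1 * D) * x 1 2 + (r 1 2 * D) * x 2 2 + (r 2 1 * D) * x 1 1 + (r 2 2 * D) * x 1 2"
    unfolding r by (simp add: algebra_simps)
  also have "\<dots> = D * (r 1 1 * x 1 2 + r 1 2 * x 2 2 + r 2 1 * x 1 1 + r 2 2 * x 1 2)"
    by (simp add: algebra_simps)
  finally have e2: "m22 * x 1 1 = m11 * x 2 2" using E12 \<open>s \<noteq> 0\<close> by simp
  have "D * x 1 1 = m11 * (m22 * x 1 1) - m12 * (m12 * x 1 1)" unfolding D by (simp add: algebra_simps)
  also have "\<dots> = 0" using tr e1 e2 by (simp add: algebra_simps)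
  finally have x11: "x 1 1 = 0" using \<open>D > 0\<close> by simp
  have "m11 \<noteq> 0" using \<open>D > 0\<close> D by auto
  then have "x 1 2 = 0" "x 2 2 = 0" using e1 e2 x11 by simp_all
  then show ?thesis using x11 x_sym exhaust_2[of a] exhaust_2[of b] by auto
qed

lemma metric_skew_2x2_annihilates_traceless:
  fixes M :: "real^2^2" and r :: "2 \<Rightarrow> 2 \<Rightarrow> real" and x :: "2 \<Rightarrow> 2 \<Rightarrow> 'v::real_inner"
  assumes det: "det M > 0" and sym: "M $ 2 $ 1 = M $ 1 $ 2"
    and skew: "\<And>k l. (\<Sum>c\<in>UNIV. r k c * M $ c $ l) + (\<Sum>c\<in>UNIV. r l c * M $ c $ k) = 0"
    and s: "(\<Sum>c\<in>UNIV. r 2 c * M $ c $ 1) \<noteq> 0"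
    and x_sym: "x 2 1 = x 1 2"
    and annihilated: "\<And>k l. (\<Sum>c\<in>UNIV. r k c *\<^sub>R x c l) + (\<Sum>c\<in>UNIV. r l c *\<^sub>R x k c) = 0"
    and traceless: "(\<Sum>a\<in>UNIV. \<Sum>b\<in>UNIV. matrix_inv M $ a $ b *\<^sub>R x a b) = 0"
  shows "x a b = 0"
proof -
  have "inner (x a b) w = 0" for w
  proof (rule metric_skew_2x2_annihilates_traceless_real[OF det sym skew s])
    show "inner (x 2 1) w = inner (x 1 2) w" using x_sym by simp
    show "(\<Sum>c\<in>UNIV. r k c * inner (x c l) w) + (\<Sum>c\<in>UNIV. r l c * inner (x k c) w) = 0" for k l
      using arg_cong[OF annihilated[of k l], of "\<lambda>v. inner v w"] by (simp add: inner_add_left inner_sum_left)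
    show "(\<Sum>a\<in>UNIV. \<Sum>b\<in>UNIV. matrix_inv M $ a $ b * inner (x a b) w) = 0"
      using arg_cong[OF traceless, of "\<lambda>v. inner v w"] by (simp add: inner_sum_left)
  qed
  then show ?thesis using inner_eq_zero_iff by blast
qed

lemma gmat_symmetric: "gmat f q $ a $ b = gmat f q $ b $ a"
  unfolding gmat_def by (simp add: inner_commute)

lemma moeb_metric_symmetric: "moeb_metric f q $ a $ b = moeb_metric f q $ b $ a"
  unfolding moeb_metric_def by (simp add: gmat_symmetric)

lemma det_moeb_metric: "det (moeb_metric f q) = (rho f q) ^ 4 * det (gmat f q)"
  by (simp add: det_2 moeb_metric_def algebra_simps power4_eq_xxxx power2_eq_square)

context
  fixes U :: "(real^2) set" and f :: "real^2 \<Rightarrow> 'e::euclidean_space"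
  assumes immersion: "immersion_on U f"
begin

lemma open_U: "open U"
  using immersion unfolding immersion_on_def by blast

lemma smooth_on_pd_f: "smooth_on U (pd a f)"
  using immersion smooth_on_pd unfolding immersion_on_def by blast

lemma smooth_on_pd_pd_f: "smooth_on U (pd a (pd b f))"
  by (rule smooth_on_pd[OF smooth_on_pd_f])

lemma det_gmat_pos:
  assumes "p \<in> U"
  shows "det (gmat f p) > 0"
proof -
  define u v where "u = pd 1 f p" "v = pd 2 f p"
  have comb: "(\<Sum>a\<in>UNIV. (vector [s, t] :: real^2) $ a *\<^sub>R pd a f p) = s *\<^sub>R u + t *\<^sub>R v" for s t
    by (simp add: sum_2 u_v_def)
  have inj: "inj (\<lambda>w::real^2. \<Sum>a\<in>UNIV. w $ a *\<^sub>R pd a f p)"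
    using immersion assms unfolding immersion_on_def by blast
  have indep: "s *\<^sub>R u + t *\<^sub>R v \<noteq> 0" if "s \<noteq> 0 \<or> t \<noteq> 0" for s t
  proof
    assume "s *\<^sub>R u + t *\<^sub>R v = 0"
    then have "(\<Sum>a\<in>UNIV. (vector [s, t] :: real^2) $ a *\<^sub>R pd a f p) = (\<Sum>a\<in>UNIV. (0::real^2) $ a *\<^sub>R pd a f p)"
      unfolding comb by simp
    then have "(vector [s, t] :: real^2) = 0" using inj unfolding inj_def by blast
    then have "(vector [s, t] :: real^2) $ 1 = 0" "(vector [s, t] :: real^2) $ 2 = 0" by simp_all
    then show False using that by simp
  qed
  define c where "c = inner u v / inner v v"
  have vv: "inner v v > 0" using indep[of 0 1] by simp
  have "0 < inner (u - c *\<^sub>R v) (u - c *\<^sub>R v)" using indep[of 1 "-c"] by simp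
  also have "\<dots> = inner u u - 2 * c * inner u v + c * c * inner v v"
    by (simp add: inner_diff_left inner_diff_right inner_commute algebra_simps)
  also have "\<dots> = det (gmat f p) / inner v v"
    using vv by (simp add: det_2 gmat_def u_v_def[symmetric] inner_commute c_def field_simps power2_eq_square)
  finally show ?thesis using vv by (simp add: zero_less_divide_iff)
qed

lemma gmat_metric_field: "metric_field U (gmat f)"
proof
  show "smooth_on U (\<lambda>q. gmat f q $ a $ b)" for a b
    unfolding gmat_def by (simp add: smooth_on_inner open_U smooth_on_pd_f)
  show "det (gmat f q) \<noteq> 0" if "q \<in> U" for q using det_gmat_pos[OF that] by simp
qed (use open_U gmat_symmetric in auto)

lemma ginv_gmat_contract:
  assumes "q \<in> U"
  shows "(\<Sum>a\<in>UNIV. ginv f q $ a $ b * gmat f q $ a $ c) = (if c = b then 1 else 0)"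
  using matrix_inv_2x2_contract[of "gmat f q" b c] det_gmat_pos[OF assms]
  unfolding ginv_def by (simp add: gmat_symmetric[of f q _ c])

lemma nproj_normal:
  assumes "q \<in> U"
  shows "inner (nproj f q v) (pd c f q) = 0"
proof -
  have "inner (tproj f q v) (pd c f q)
      = (\<Sum>a\<in>UNIV. \<Sum>b\<in>UNIV. inner v (pd b f q) * (ginv f q $ a $ b * gmat f q $ a $ c))"
    unfolding tproj_def gmat_def by (simp add: inner_sum_left algebra_simps)
  also have "\<dots> = (\<Sum>b\<in>UNIV. inner v (pd b f q) * (\<Sum>a\<in>UNIV. ginv f q $ a $ b * gmat f q $ a $ c))"
    unfolding sum_distrib_left by (rule sum.swap)
  also have "\<dots> = inner v (pd c f q)"
    by (simp add: ginv_gmat_contract[OF assms] if_distrib cong: if_cong)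
  finally show ?thesis unfolding nproj_def by (simp add: inner_diff_left)
qed

lemma sff_normal: "q \<in> U \<Longrightarrow> inner (sff f q a b) (pd c f q) = 0"
  unfolding sff_def by (rule nproj_normal)

lemma meancurv_normal: "q \<in> U \<Longrightarrow> inner (meancurv f q) (pd c f q) = 0"
  unfolding meancurv_def by (simp add: inner_sum_left sff_normal)

lemma pd_pd_f_commute:
  assumes "q \<in> U"
  shows "pd a (pd b f) q = pd b (pd a f) q"
proof (rule euclidean_eqI)
  fix w :: 'e
  have "inner (pd a (pd b f) q) w = pd a (pd b (\<lambda>x. inner (f x) w)) q" for a b
  proof -
    have "pd a (pd b (\<lambda>x. inner (f x) w)) q = pd a (\<lambda>x. inner (pd b f x) w) q"
      using immersion open_U assms
      by (intro pd_cong[OF open_U assms] pd_linear[OF bounded_linear_inner_left])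
         (auto simp: immersion_on_def)
    also have "\<dots> = inner (pd a (pd b f) q) w"
      by (rule pd_linear[OF bounded_linear_inner_left smooth_on_pd_f assms])
    finally show ?thesis by simp
  qed
  moreover have "smooth_on U (\<lambda>x. inner (f x) w)"
    using immersion open_U smooth_on_inner_const unfolding immersion_on_def by blast
  ultimately show "inner (pd a (pd b f) q) w = inner (pd b (pd a f) q) w"
    using pd_commute[OF open_U _ assms] by simp
qed

lemma sff_symmetric: "q \<in> U \<Longrightarrow> sff f q a b = sff f q b a"
  unfolding sff_def using pd_pd_f_commute by simp

lemma moeb_sff_symmetric: "q \<in> U \<Longrightarrow> moeb_sff f q a b = moeb_sff f q b a"
  by (simp add: moeb_sff_def sff_symmetric gmat_symmetric)

lemma smooth_on_ginv: "smooth_on U (\<lambda>q. ginv f q $ a $ b)"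
  unfolding ginv_def by (rule metric_field.smooth_on_inverse_entries[OF gmat_metric_field])

lemma smooth_on_sff: "smooth_on U (\<lambda>q. sff f q a b)"
  unfolding sff_def nproj_def tproj_def
  by (intro smooth_on_diff smooth_on_sum smooth_on_scaleR smooth_on_mult smooth_on_inner smooth_on_ginv
      smooth_on_pd_f smooth_on_pd_pd_f open_U) simp_all

lemma smooth_on_meancurv: "smooth_on U (meancurv f)"
  unfolding meancurv_def
  by (intro smooth_on_scaleR smooth_on_const smooth_on_sum smooth_on_ginv smooth_on_sff open_U) simp_all

lemma smooth_on_rho_squared: "smooth_on U (\<lambda>q. 2 * (sff_norm2 f q - 2 * (norm (meancurv f q))\<^sup>2))"
  unfolding sff_norm2_def power2_norm_eq_inner
  by (intro smooth_on_mult smooth_on_diff smooth_on_const smooth_on_sum smooth_on_inner smooth_on_ginv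
      smooth_on_sff smooth_on_meancurv open_U) simp_all

lemma trace_ginv_gmat:
  assumes "q \<in> U"
  shows "(\<Sum>a\<in>UNIV. \<Sum>b\<in>UNIV. ginv f q $ a $ b * gmat f q $ a $ b) = 2"
  using ginv_gmat_contract[OF assms, of 1 1] ginv_gmat_contract[OF assms, of 2 2] by (simp add: sum_2)

lemma ginv_symmetric:
  assumes "q \<in> U"
  shows "ginv f q $ a $ b = ginv f q $ b $ a"
  using det_gmat_pos[OF assms] unfolding ginv_def by (intro matrix_inv_2x2_symmetric gmat_symmetric) simp

lemma sff_norm2_umbilic:
  assumes q: "q \<in> U" and umbilic: "\<And>a b. sff f q a b = gmat f q $ a $ b *\<^sub>R meancurv f q"
  shows "sff_norm2 f q = 2 * inner (meancurv f q) (meancurv f q)"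
proof -
  let ?i = "ginv f q" and ?g = "gmat f q" and ?h = "inner (meancurv f q) (meancurv f q)"
  have contract: "(\<Sum>d\<in>UNIV. ?i $ b $ d * ?g $ c $ d) = (if b = c then 1 else 0)" for b c
    using ginv_gmat_contract[OF q, of b c] by (simp add: ginv_symmetric[OF q, of b] gmat_symmetric[of f q c] eq_commute)
  have "sff_norm2 f q
      = (\<Sum>a\<in>UNIV. \<Sum>b\<in>UNIV. \<Sum>c\<in>UNIV. (?i $ a $ c * ?g $ a $ b) * (\<Sum>d\<in>UNIV. ?i $ b $ d * ?g $ c $ d)) * ?h"
    unfolding sff_norm2_def umbilic by (simp add: sum_distrib_left sum_distrib_right algebra_simps)
  also have "\<dots> = (\<Sum>a\<in>UNIV. \<Sum>b\<in>UNIV. ?i $ a $ b * ?g $ a $ b) * ?h"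
    by (simp add: contract if_distrib cong: if_cong)
  also have "\<dots> = 2 * ?h" by (simp add: trace_ginv_gmat[OF q])
  finally show ?thesis .
qed

context
  assumes umbilic_free: "umbilic_free U f"
begin

lemma rho_pos: "q \<in> U \<Longrightarrow> rho f q > 0"
  using umbilic_free unfolding umbilic_free_def by blast

lemma smooth_on_rho: "smooth_on U (rho f)"
proof -
  have "smooth_on U (\<lambda>q. sqrt (2 * (sff_norm2 f q - 2 * (norm (meancurv f q))\<^sup>2)))"
    using rho_pos unfolding rho_def by (intro smooth_on_sqrt[OF open_U smooth_on_rho_squared]) simp
  then show ?thesis by (simp add: rho_def[abs_def])
qed

lemma det_moeb_metric_pos: "q \<in> U \<Longrightarrow> det (moeb_metric f q) > 0"
  unfolding det_moeb_metric by (intro mult_pos_pos zero_less_power rho_pos det_gmat_pos)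

lemma smooth_on_gmat: "smooth_on U (\<lambda>q. gmat f q $ a $ b)"
  by (rule metric_field.smooth_entries[OF gmat_metric_field])

lemma moeb_metric_field: "metric_field U (moeb_metric f)"
proof
  show "smooth_on U (\<lambda>q. moeb_metric f q $ a $ b)" for a b
    unfolding moeb_metric_def power2_eq_square
    by (simp add: smooth_on_mult smooth_on_rho smooth_on_gmat open_U)
  show "det (moeb_metric f q) \<noteq> 0" if "q \<in> U" for q using det_moeb_metric_pos[OF that] by simp
qed (use open_U moeb_metric_symmetric in auto)

lemma moeb_sff_normal_field: "normal_field U f (\<lambda>q. moeb_sff f q a b)"
proof -
  have "smooth_on U (\<lambda>q. moeb_sff f q a b)"
    unfolding moeb_sff_def
    by (intro smooth_on_scaleR smooth_on_diff smooth_on_rho smooth_on_sff smooth_on_gmat smooth_on_meancurv open_U)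
  then show ?thesis
    unfolding normal_field_def by (simp add: moeb_sff_def inner_diff_left sff_normal meancurv_normal)
qed

lemma matrix_inv_moeb_metric:
  assumes "q \<in> U"
  shows "matrix_inv (moeb_metric f q) $ a $ b = ginv f q $ a $ b / (rho f q)\<^sup>2"
proof -
  have "det (gmat f q) \<noteq> 0" "det (moeb_metric f q) \<noteq> 0" "rho f q \<noteq> 0"
    using det_gmat_pos[OF assms] det_moeb_metric_pos[OF assms] rho_pos[OF assms] by auto
  moreover have "moeb_metric f q $ a $ b = (rho f q)\<^sup>2 * gmat f q $ a $ b" for a b
    by (simp add: moeb_metric_def)
  ultimately show ?thesis
    unfolding ginv_def using exhaust_2[of a] exhaust_2[of b]
    by (auto simp: matrix_inv_2x2 det_moeb_metric power4_eq_xxxx power2_eq_square)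
qed

lemma moeb_sff_traceless:
  assumes "q \<in> U"
  shows "(\<Sum>a\<in>UNIV. \<Sum>b\<in>UNIV. matrix_inv (moeb_metric f q) $ a $ b *\<^sub>R moeb_sff f q a b) = 0"
proof -
  have "(\<Sum>a\<in>UNIV. \<Sum>b\<in>UNIV. ginv f q $ a $ b *\<^sub>R moeb_sff f q a b)
     = rho f q *\<^sub>R ((\<Sum>a\<in>UNIV. \<Sum>b\<in>UNIV. ginv f q $ a $ b *\<^sub>R sff f q a b)
        - (\<Sum>a\<in>UNIV. \<Sum>b\<in>UNIV. ginv f q $ a $ b * gmat f q $ a $ b) *\<^sub>R meancurv f q)"
    by (simp add: moeb_sff_def scaleR_diff_right scaleR_sum_right scaleR_sum_left sum_subtractf mult_ac)
  also have "\<dots> = 0"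
    by (simp add: trace_ginv_gmat[OF assms] meancurv_def)
  finally have "(\<Sum>a\<in>UNIV. \<Sum>b\<in>UNIV. ginv f q $ a $ b *\<^sub>R moeb_sff f q a b) = 0" .
  moreover have "(\<Sum>a\<in>UNIV. \<Sum>b\<in>UNIV. (ginv f q $ a $ b / (rho f q)\<^sup>2) *\<^sub>R moeb_sff f q a b)
      = inverse ((rho f q)\<^sup>2) *\<^sub>R (\<Sum>a\<in>UNIV. \<Sum>b\<in>UNIV. ginv f q $ a $ b *\<^sub>R moeb_sff f q a b)"
    by (simp add: scaleR_sum_right divide_inverse mult.commute)
  ultimately show ?thesis by (simp add: matrix_inv_moeb_metric[OF assms])
qed

lemma moeb_sff_nonzero:
  assumes "q \<in> U"
  shows "\<exists>a b. moeb_sff f q a b \<noteq> 0"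
proof (rule ccontr)
  assume "\<not> (\<exists>a b. moeb_sff f q a b \<noteq> 0)"
  then have "sff f q a b = gmat f q $ a $ b *\<^sub>R meancurv f q" for a b
    using rho_pos[OF assms] by (auto simp: moeb_sff_def)
  then have "sff_norm2 f q = 2 * inner (meancurv f q) (meancurv f q)" by (rule sff_norm2_umbilic[OF assms])
  then have "rho f q = 0" unfolding rho_def by (simp add: power2_norm_eq_inner)
  then show False using rho_pos[OF assms] by simp
qed

lemma moeb_gauss_eq_riemann:
  "moeb_gauss f p = (\<Sum>c\<in>UNIV. riemann (moeb_metric f) p 1 2 2 c * moeb_metric f p $ c $ 1)
     / det (moeb_metric f p)"
  unfolding moeb_gauss_def moeb_curv_eq_riemann ..

lemma moeb_gauss_eq_0_iff:
  assumes p: "p \<in> U"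
  shows "moeb_gauss f p = 0 \<longleftrightarrow> (\<forall>i j k c. moeb_curv f p i j k c = 0)"
proof
  interpret metric_field U "moeb_metric f" by (rule moeb_metric_field)
  assume "moeb_gauss f p = 0"
  then have "(\<Sum>c\<in>UNIV. riemann (moeb_metric f) p 1 2 2 c * moeb_metric f p $ c $ 1) = 0"
    using det_moeb_metric_pos[OF p] unfolding moeb_gauss_eq_riemann by simp
  then have R12: "riemann (moeb_metric f) p 1 2 k c = 0" for k c
    by (rule metric_skew_2x2_eq_0[OF det_nonzero[OF p] symmetric riemann_lowered_skew[OF p]])
  have "riemann (moeb_metric f) p i j k c = 0" for i j k c
  proof -
    consider "i = j" | "i = 1" "j = 2" | "i = 2" "j = 1" using exhaust_2[of i] exhaust_2[of j] by auto
    then show ?thesis using R12 riemann_diag riemann_antisym[of "moeb_metric f" p 1 2] by cases auto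
  qed
  then show "\<forall>i j k c. moeb_curv f p i j k c = 0" unfolding moeb_curv_eq_riemann by blast
qed (simp add: moeb_gauss_def)

lemma moeb_gauss_eq_0_if_curvature_annihilates_moeb_sff:
  assumes p: "p \<in> U"
    and annihilated: "\<And>k l. (\<Sum>c\<in>UNIV. moeb_curv f p 1 2 k c *\<^sub>R moeb_sff f p c l)
                          + (\<Sum>c\<in>UNIV. moeb_curv f p 1 2 l c *\<^sub>R moeb_sff f p k c) = 0"
  shows "moeb_gauss f p = 0"
proof (rule ccontr)
  interpret metric_field U "moeb_metric f" by (rule moeb_metric_field)
  assume "moeb_gauss f p \<noteq> 0"
  then have "(\<Sum>c\<in>UNIV. riemann (moeb_metric f) p 1 2 2 c * moeb_metric f p $ c $ 1) \<noteq> 0"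
    unfolding moeb_gauss_eq_riemann by auto
  moreover have "moeb_sff f p 2 1 = moeb_sff f p 1 2"
    by (rule moeb_sff_symmetric[OF p])
  ultimately have "moeb_sff f p a b = 0" for a b
    by (rule metric_skew_2x2_annihilates_traceless[OF det_moeb_metric_pos[OF p] symmetric
        riemann_lowered_skew[OF p] _ _ annihilated[unfolded moeb_curv_eq_riemann] moeb_sff_traceless[OF p]])
  then show False using moeb_sff_nonzero[OF p] by blast
qed

end

end

theorem corollary2p2:
  fixes U :: "(real^2) set" and f :: "real^2 \<Rightarrow> 'e::euclidean_space"
  assumes "immersion_on U f"
    and "umbilic_free U f"
    and "flat_normal_bundle U f"
  shows "semi_parallel_moeb_sff U f \<longleftrightarrow> (\<forall>p\<in>U. moeb_gauss f p = 0)"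
proof -
  have flat: "normal_curv f (\<lambda>q. moeb_sff f q k l) p i j = 0" if "p \<in> U" for p i j k l
    using assms(3) moeb_sff_normal_field[OF assms(1,2)] that unfolding flat_normal_bundle_def by blast
  have semi_parallel_iff: "semi_parallel_moeb_sff U f \<longleftrightarrow> (\<forall>p\<in>U. \<forall>i j k l.
      (\<Sum>c\<in>UNIV. moeb_curv f p i j k c *\<^sub>R moeb_sff f p c l)
      + (\<Sum>c\<in>UNIV. moeb_curv f p i j l c *\<^sub>R moeb_sff f p k c) = 0)"
    unfolding semi_parallel_moeb_sff_def by (simp add: flat algebra_simps neg_eq_iff_add_eq_0)
  show ?thesis
  proof
    assume "semi_parallel_moeb_sff U f"
    then show "\<forall>p\<in>U. moeb_gauss f p = 0"
      using moeb_gauss_eq_0_if_curvature_annihilates_moeb_sff[OF assms(1,2)] semi_parallel_iff by blast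
  next
    assume "\<forall>p\<in>U. moeb_gauss f p = 0"
    then show "semi_parallel_moeb_sff U f"
      unfolding semi_parallel_iff using moeb_gauss_eq_0_iff[OF assms(1,2)] by simp
  qed
qed
end
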